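(* Let $n\ge 1$ be an integer, let $\varepsilon\in(0,1)$ and set $\delta=-\frac{\log_2(1-\varepsilon)}{n}$. Then every channel $W$ satisfies $$\frac{\mathcal{R}^{(\varepsilon)}_{W,n}}{2}-\delta\;\le\;\mathcal{R}^{(0)}_{W,n}.$$ Consequently, with $\delta^*=-\log_2(1-\varepsilon)$, every channel $W$ satisfies $\frac{\mathcal{R}^{(\varepsilon)}_{W}}{2}-\delta^*\le \mathcal{R}^{(0)}_{W}$.
   Context: Fix an integer $q\ge 1$, $Q=2^q$, $[Q]=\{1,\dots,Q\}$. A (two-source/two-terminal deterministic) channel is a function $W=(W_1,W_2)$ with $W_i:[Q]^2\to\mathcal{O}$ for some finite output alphabet $\mathcal{O}$. For block length $n$, $W^{(n)}=(W^{(n)}_1,W^{(n)}_2)$ acts coordinatewise: for $x=(x_1,\dots,x_n),y=(y_1,\dots,y_n)\in[Q]^n$, $W^{(n)}_i(x,y)=(W_i(x_1,y_1),\dots,W_i(x_n,y_n))$. A code of block length $n$ with message sets $[M_1],[M_2]$ consists of encoders $E_i:[M_i]\to[Q]^n$ and decoders $D_i:\mathcal{O}^n\to[M_i]$ ($i=1,2$); it succeeds on $(m_1,m_2)$ if $D_i(W^{(n)}_i(E_1(m_1),E_2(m_2)))=m_i$ for both $i=1,2$. A rate pair $(R_1,R_2)$ is achievable with probability $1-\varepsilon$ and block length $n$ if, with $M_i=2^{R_in}$ (positive integers), some code succeeds with probability at least $1-\varepsilon$ when $(m_1,m_2)$ is uniform on $[M_1]\times[M_2]$. The $\varepsilon$-error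 sum capacity is $\mathcal{R}^{(\varepsilon)}_{W,n}=\sup(R_1+R_2)$ over such pairs, and $\mathcal{R}^{(\varepsilon)}_{W}=\sup_n\mathcal{R}^{(\varepsilon)}_{W,n}$. For $\varepsilon=0$ the code must succeed on every message pair. Logarithms are base 2. *)

theory Defs
  imports Complex_Main
begin

definition words :: "nat \<Rightarrow> nat \<Rightarrow> nat list set" where
  "words q n = {x. length x = n \<and> set x \<subseteq> {1..2^q}}"

definition chan_n :: "(nat \<Rightarrow> nat \<Rightarrow> 'o) \<Rightarrow> nat list \<Rightarrow> nat list \<Rightarrow> 'o list" where
  "chan_n W x y = map (\<lambda>(a, b). W a b) (zip x y)"

definition is_code :: "nat \<Rightarrow> nat \<Rightarrow> nat \<Rightarrow> nat \<Rightarrow> (nat \<Rightarrow> nat list) \<Rightarrow> (nat \<Rightarrow> nat list)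
    \<Rightarrow> ('o list \<Rightarrow> nat) \<Rightarrow> ('o list \<Rightarrow> nat) \<Rightarrow> bool" where
  "is_code q n M1 M2 E1 E2 D1 D2 \<longleftrightarrow>
     (\<forall>m\<in>{1..M1}. E1 m \<in> words q n) \<and> (\<forall>m\<in>{1..M2}. E2 m \<in> words q n) \<and>
     (\<forall>z. length z = n \<longrightarrow> D1 z \<in> {1..M1}) \<and> (\<forall>z. length z = n \<longrightarrow> D2 z \<in> {1..M2})"

definition succeeds :: "(nat \<Rightarrow> nat \<Rightarrow> 'o) \<Rightarrow> (nat \<Rightarrow> nat \<Rightarrow> 'o) \<Rightarrow> (nat \<Rightarrow> nat list) \<Rightarrow> (nat \<Rightarrow> nat list)
    \<Rightarrow> ('o list \<Rightarrow> nat) \<Rightarrow> ('o list \<Rightarrow> nat) \<Rightarrow> nat \<Rightarrow> nat \<Rightarrow> bool" where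
  "succeeds W1 W2 E1 E2 D1 D2 m1 m2 \<longleftrightarrow>
     D1 (chan_n W1 (E1 m1) (E2 m2)) = m1 \<and> D2 (chan_n W2 (E1 m1) (E2 m2)) = m2"

text \<open>Message set sizes (M1,M2) are achievable with success probability at least 1 - eps
  (messages uniform on [M1] x [M2]) at block length n.\<close>
definition achievable :: "nat \<Rightarrow> (nat \<Rightarrow> nat \<Rightarrow> 'o) \<Rightarrow> (nat \<Rightarrow> nat \<Rightarrow> 'o) \<Rightarrow> real \<Rightarrow> nat
    \<Rightarrow> nat \<Rightarrow> nat \<Rightarrow> bool" where
  "achievable q W1 W2 eps n M1 M2 \<longleftrightarrow> M1 \<ge> 1 \<and> M2 \<ge> 1 \<and>
     (\<exists>E1 E2 D1 D2. is_code q n M1 M2 E1 E2 D1 D2 \<and>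
        real (card {(m1, m2). m1 \<in> {1..M1} \<and> m2 \<in> {1..M2} \<and> succeeds W1 W2 E1 E2 D1 D2 m1 m2})
          \<ge> (1 - eps) * real M1 * real M2)"

definition sum_cap_n :: "nat \<Rightarrow> (nat \<Rightarrow> nat \<Rightarrow> 'o) \<Rightarrow> (nat \<Rightarrow> nat \<Rightarrow> 'o) \<Rightarrow> real \<Rightarrow> nat \<Rightarrow> real" where
  "sum_cap_n q W1 W2 eps n =
     Sup {(log 2 (real M1) + log 2 (real M2)) / real n | M1 M2. achievable q W1 W2 eps n M1 M2}"

definition sum_cap :: "nat \<Rightarrow> (nat \<Rightarrow> nat \<Rightarrow> 'o) \<Rightarrow> (nat \<Rightarrow> nat \<Rightarrow> 'o) \<Rightarrow> real \<Rightarrow> real" where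
  "sum_cap q W1 W2 eps = (SUP n\<in>{1..}. sum_cap_n q W1 W2 eps n)"

end

theory Submission imports Defs begin

text \<open>An \<open>\<epsilon>\<close>-error code succeeds on at least a \<open>(1 - \<epsilon>)\<close>-fraction of the message
  grid \<open>[M\<^sub>1] \<times> [M\<^sub>2]\<close>, so by averaging some row (if \<open>M\<^sub>1 \<le> M\<^sub>2\<close>) or column is successful on a
  \<open>(1 - \<epsilon>)\<close>-fraction of its entries. Fixing that single message of one sender and keeping
  the good messages of the other gives a zero-error code with
  \<open>N\<^sub>1 N\<^sub>2 \<ge> (1 - \<epsilon>) max M\<^sub>1 M\<^sub>2\<close>, and \<open>max M\<^sub>1 M\<^sub>2 \<ge> \<surd>(M\<^sub>1 M\<^sub>2)\<close>. Taking logarithms bounds every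
  \<open>\<epsilon>\<close>-error sum rate by twice a zero-error one plus \<open>2\<delta>\<close>; the suprema involved are finite
  because a successful message pair is determined by its codewords, so
  \<open>(1 - \<epsilon>) M\<^sub>1 M\<^sub>2 \<le> Q\<^sup>2\<^sup>n\<close>.\<close>

lemma exists_ge_average:
  fixes f :: "'a \<Rightarrow> real"
  assumes "finite A" "A \<noteq> {}" "c * real (card A) \<le> (\<Sum>a\<in>A. f a)"
  shows "\<exists>a\<in>A. c \<le> f a"
proof (rule ccontr)
  assume "\<not> (\<exists>a\<in>A. c \<le> f a)"
  then have "(\<Sum>a\<in>A. f a) < (\<Sum>a\<in>A. c)"
    using assms(1,2) by (intro sum_strict_mono) (auto simp: not_le)
  with assms(3) show False by (simp add: mult.commute)
qed

lemma exists_row_with_large_section: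
  assumes "finite A" "finite B" "A \<noteq> {}"
    and "c * real (card A) * real (card B) \<le> real (card {(a, b). a \<in> A \<and> b \<in> B \<and> P a b})"
  shows "\<exists>a\<in>A. c * real (card B) \<le> real (card {b \<in> B. P a b})"
proof -
  have "{(a, b). a \<in> A \<and> b \<in> B \<and> P a b} = Sigma A (\<lambda>a. {b \<in> B. P a b})" by auto
  then have "real (card {(a, b). a \<in> A \<and> b \<in> B \<and> P a b}) = (\<Sum>a\<in>A. real (card {b \<in> B. P a b}))"
    using assms(1,2) by (simp add: card_SigmaI)
  with assms show ?thesis
    by (intro exists_ge_average) (simp_all add: mult.commute mult.left_commute)
qed

lemma exists_column_with_large_section:
  assumes "finite A" "finite B" "B \<noteq> {}"
    and "c * real (card A) * real (card B) \<le> real (card {(a, b). a \<in> A \<and> b \<in> B \<and> P a b})"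
  shows "\<exists>b\<in>B. c * real (card A) \<le> real (card {a \<in> A. P a b})"
proof -
  have "{(a, b). a \<in> A \<and> b \<in> B \<and> P a b} = prod.swap ` {(b, a). b \<in> B \<and> a \<in> A \<and> P a b}"
    by auto
  then have "card {(a, b). a \<in> A \<and> b \<in> B \<and> P a b} = card {(b, a). b \<in> B \<and> a \<in> A \<and> P a b}"
    by (simp add: card_image)
  with assms show ?thesis
    by (intro exists_row_with_large_section) (simp_all add: mult.commute mult.left_commute)
qed

lemma finite_words: "finite (words q n)"
  and card_words: "card (words q n) = 2 ^ (q * n)"
proof -
  have words_eq: "words q n = {xs. set xs \<subseteq> {1..(2::nat) ^ q} \<and> length xs = n}"
    unfolding words_def by auto
  show "finite (words q n)"
    unfolding words_eq by (rule finite_lists_length_eq) simp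
  show "card (words q n) = 2 ^ (q * n)"
    unfolding words_eq by (subst card_lists_length_eq) (simp_all add: power_mult)
qed

lemma achievable_mono:
  assumes "achievable q W1 W2 eps n M1 M2" "eps \<le> eps'"
  shows "achievable q W1 W2 eps' n M1 M2"
proof -
  have "(1 - eps') * real M1 * real M2 \<le> (1 - eps) * real M1 * real M2"
    using assms(2) by (intro mult_right_mono) auto
  with assms(1) show ?thesis
    unfolding achievable_def by (meson order_trans)
qed

lemma achievable_product_le:
  assumes "achievable q W1 W2 eps n M1 M2"
  shows "(1 - eps) * real M1 * real M2 \<le> 2 ^ (2 * q * n)"
proof -
  obtain E1 E2 D1 D2 where code: "is_code q n M1 M2 E1 E2 D1 D2"
    and many: "(1 - eps) * real M1 * real M2
      \<le> real (card {(m1, m2). m1 \<in> {1..M1} \<and> m2 \<in> {1..M2} \<and> succeeds W1 W2 E1 E2 D1 D2 m1 m2})"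
    using assms unfolding achievable_def by auto
  define S where "S = {(m1, m2). m1 \<in> {1..M1} \<and> m2 \<in> {1..M2} \<and> succeeds W1 W2 E1 E2 D1 D2 m1 m2}"
  define enc where "enc = (\<lambda>(m1, m2). (E1 m1, E2 m2))"
  \<comment> \<open>The decoders recover a successful message pair from its codewords.\<close>
  have "inj_on enc S"
  proof (rule inj_onI, clarify)
    fix a1 a2 b1 b2 assume "(a1, a2) \<in> S" "(b1, b2) \<in> S" "enc (a1, a2) = enc (b1, b2)"
    then have "succeeds W1 W2 E1 E2 D1 D2 a1 a2" "succeeds W1 W2 E1 E2 D1 D2 b1 b2"
      and "E1 a1 = E1 b1" "E2 a2 = E2 b2"
      unfolding S_def enc_def by auto
    then show "a1 = b1 \<and> a2 = b2"
      unfolding succeeds_def by metis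
  qed
  then have "card S = card (enc ` S)"
    by (simp add: card_image)
  also have "\<dots> \<le> card (words q n \<times> words q n)"
    using code unfolding S_def enc_def is_code_def
    by (intro card_mono) (auto simp: finite_words)
  also have "\<dots> = 2 ^ (2 * q * n)"
    by (simp add: card_cartesian_product card_words power_add[symmetric] add_mult_distrib)
  finally have "real (card S) \<le> 2 ^ (2 * q * n)"
    by (metis of_nat_le_iff of_nat_numeral of_nat_power)
  with many show ?thesis unfolding S_def by linarith
qed

lemma achievable_subcode:
  assumes code: "is_code q n M1 M2 E1 E2 D1 D2"
    and T1: "T1 \<subseteq> {1..M1}" "T1 \<noteq> {}" and T2: "T2 \<subseteq> {1..M2}" "T2 \<noteq> {}"
    and success: "\<And>m1 m2. m1 \<in> T1 \<Longrightarrow> m2 \<in> T2 \<Longrightarrow> succeeds W1 W2 E1 E2 D1 D2 m1 m2"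
  shows "achievable q W1 W2 0 n (card T1) (card T2)"
proof -
  have fin: "finite T1" "finite T2" using T1 T2 finite_subset by auto
  obtain f where f: "bij_betw f {1..card T1} T1" using ex_bij_betw_nat_finite_1 fin by blast
  obtain g where g: "bij_betw g {1..card T2} T2" using ex_bij_betw_nat_finite_1 fin by blast
  \<comment> \<open>Relabel \<open>T\<^sub>i\<close> as \<open>{1..card T\<^sub>i}\<close>; outputs decoded outside \<open>T\<^sub>i\<close> are sent to message 1.\<close>
  define E1' where "E1' = E1 \<circ> f"
  define E2' where "E2' = E2 \<circ> g"
  define D1' where "D1' = (\<lambda>z. if D1 z \<in> T1 then the_inv_into {1..card T1} f (D1 z) else 1)"
  define D2' where "D2' = (\<lambda>z. if D2 z \<in> T2 then the_inv_into {1..card T2} g (D2 z) else 1)"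
  have card_pos: "card T1 \<ge> 1" "card T2 \<ge> 1"
    using T1 T2 fin by (auto simp: Suc_le_eq card_gt_0_iff)
  have f_into: "f m \<in> {1..M1}" if "m \<in> {1..card T1}" for m
    using that f T1 bij_betwE by blast
  have g_into: "g m \<in> {1..M2}" if "m \<in> {1..card T2}" for m
    using that g T2 bij_betwE by blast
  have "D1' z \<in> {1..card T1}" "D2' z \<in> {1..card T2}" for z
    using card_pos f g the_inv_into_into[of f "{1..card T1}" "D1 z" "{1..card T1}"]
      the_inv_into_into[of g "{1..card T2}" "D2 z" "{1..card T2}"]
    unfolding D1'_def D2'_def by (auto simp: bij_betw_def)
  with code f_into g_into have "is_code q n (card T1) (card T2) E1' E2' D1' D2'"
    unfolding is_code_def E1'_def E2'_def by simp
  moreover have "succeeds W1 W2 E1' E2' D1' D2' m1 m2"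
    if "m1 \<in> {1..card T1}" "m2 \<in> {1..card T2}" for m1 m2
  proof -
    have "f m1 \<in> T1" "g m2 \<in> T2" using that f g bij_betwE by blast+
    with success[of "f m1" "g m2"] that f g show ?thesis
      unfolding succeeds_def E1'_def E2'_def D1'_def D2'_def
      by (auto simp: bij_betw_def the_inv_into_f_f)
  qed
  then have "{(m1, m2). m1 \<in> {1..card T1} \<and> m2 \<in> {1..card T2} \<and> succeeds W1 W2 E1' E2' D1' D2' m1 m2}
      = {1..card T1} \<times> {1..card T2}"
    by auto
  ultimately show ?thesis
    unfolding achievable_def using card_pos
    by (intro conjI exI[of _ E1'] exI[of _ E2'] exI[of _ D1'] exI[of _ D2'])
      (simp_all add: card_cartesian_product)
qed

lemma achievable_one_one: "achievable q W1 W2 0 n 1 1"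
proof -
  have "is_code q n 1 1 (\<lambda>_. replicate n 1) (\<lambda>_. replicate n 1) (\<lambda>_. 1) (\<lambda>_. 1)"
    unfolding is_code_def words_def by auto
  from achievable_subcode[OF this, of "{1}" "{1}"] show ?thesis
    by (simp add: succeeds_def)
qed

lemma achievable_zero_error_product_ge:
  assumes ach: "achievable q W1 W2 eps n M1 M2" and eps: "eps < 1"
  shows "\<exists>N1 N2. achievable q W1 W2 0 n N1 N2 \<and> (1 - eps) * real (max M1 M2) \<le> real N1 * real N2"
proof -
  obtain E1 E2 D1 D2 where code: "is_code q n M1 M2 E1 E2 D1 D2" and M: "M1 \<ge> 1" "M2 \<ge> 1"
    and many: "(1 - eps) * real (card {1..M1}) * real (card {1..M2})
      \<le> real (card {(m1, m2). m1 \<in> {1..M1} \<and> m2 \<in> {1..M2} \<and> succeeds W1 W2 E1 E2 D1 D2 m1 m2})"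
    using ach unfolding achievable_def by auto
  show ?thesis
  proof (cases "M1 \<le> M2")
    case True
    obtain m1 where m1: "m1 \<in> {1..M1}"
      and row: "(1 - eps) * real M2 \<le> real (card {m2 \<in> {1..M2}. succeeds W1 W2 E1 E2 D1 D2 m1 m2})"
      using exists_row_with_large_section[OF _ _ _ many] M by auto
    moreover have "0 < (1 - eps) * real M2" using eps M by simp
    ultimately have "{m2 \<in> {1..M2}. succeeds W1 W2 E1 E2 D1 D2 m1 m2} \<noteq> {}"
      by (metis card.empty leD of_nat_0)
    with m1 have "achievable q W1 W2 0 n (card {m1}) (card {m2 \<in> {1..M2}. succeeds W1 W2 E1 E2 D1 D2 m1 m2})"
      by (intro achievable_subcode[OF code]) auto
    with row True show ?thesis by (intro exI) (auto simp: max_def)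
  next
    case False
    obtain m2 where m2: "m2 \<in> {1..M2}"
      and column: "(1 - eps) * real M1 \<le> real (card {m1 \<in> {1..M1}. succeeds W1 W2 E1 E2 D1 D2 m1 m2})"
      using exists_column_with_large_section[OF _ _ _ many] M by auto
    moreover have "0 < (1 - eps) * real M1" using eps M by simp
    ultimately have "{m1 \<in> {1..M1}. succeeds W1 W2 E1 E2 D1 D2 m1 m2} \<noteq> {}"
      by (metis card.empty leD of_nat_0)
    with m2 have "achievable q W1 W2 0 n (card {m1 \<in> {1..M1}. succeeds W1 W2 E1 E2 D1 D2 m1 m2}) (card {m2})"
      by (intro achievable_subcode[OF code]) auto
    with column False show ?thesis by (intro exI) (auto simp: max_def)
  qed
qed

definition sum_rates :: "nat \<Rightarrow> (nat \<Rightarrow> nat \<Rightarrow> 'o) \<Rightarrow> (nat \<Rightarrow> nat \<Rightarrow> 'o) \<Rightarrow> real \<Rightarrow> nat \<Rightarrow> real set" where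
  "sum_rates q W1 W2 eps n =
     {(log 2 (real M1) + log 2 (real M2)) / real n | M1 M2. achievable q W1 W2 eps n M1 M2}"

lemma sum_cap_n_eq_Sup_sum_rates: "sum_cap_n q W1 W2 eps n = Sup (sum_rates q W1 W2 eps n)"
  unfolding sum_cap_n_def sum_rates_def ..

lemma sum_rates_nonempty: "0 \<le> eps \<Longrightarrow> sum_rates q W1 W2 eps n \<noteq> {}"
  unfolding sum_rates_def using achievable_mono[OF achievable_one_one] by blast

lemma sum_rate_le:
  assumes "achievable q W1 W2 eps n M1 M2" "eps < 1" "n \<ge> 1"
  shows "(log 2 (real M1) + log 2 (real M2)) / real n \<le> real (2 * q) - log 2 (1 - eps) / real n"
proof -
  have M: "M1 \<ge> 1" "M2 \<ge> 1" using assms(1) unfolding achievable_def by auto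
  have "log 2 ((1 - eps) * real M1 * real M2) \<le> log 2 (2 ^ (2 * q * n))"
    using achievable_product_le[OF assms(1)] M assms(2) by (subst log_le_cancel_iff) auto
  then have "log 2 (real M1) + log 2 (real M2) \<le> real (2 * q) * real n - log 2 (1 - eps)"
    using M assms(2) by (simp add: log_mult log_nat_power)
  then have "(log 2 (real M1) + log 2 (real M2)) / real n
      \<le> (real (2 * q) * real n - log 2 (1 - eps)) / real n"
    by (simp add: divide_right_mono)
  also have "\<dots> = real (2 * q) - log 2 (1 - eps) / real n"
    using assms(3) by (simp add: diff_divide_distrib)
  finally show ?thesis .
qed

lemma bdd_above_sum_rates: "eps < 1 \<Longrightarrow> n \<ge> 1 \<Longrightarrow> bdd_above (sum_rates q W1 W2 eps n)"
  unfolding sum_rates_def using sum_rate_le by (intro bdd_aboveI) blast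

lemma sum_cap_n_le:
  assumes "0 \<le> eps" "eps < 1" "n \<ge> 1"
  shows "sum_cap_n q W1 W2 eps n \<le> real (2 * q) - log 2 (1 - eps) / real n"
  unfolding sum_cap_n_eq_Sup_sum_rates
proof (rule cSup_least)
  show "sum_rates q W1 W2 eps n \<noteq> {}" using assms(1) by (rule sum_rates_nonempty)
  fix x assume "x \<in> sum_rates q W1 W2 eps n"
  then show "x \<le> real (2 * q) - log 2 (1 - eps) / real n"
    unfolding sum_rates_def using sum_rate_le assms(2,3) by auto
qed

lemma achievable_sum_rate_le_twice_zero_error:
  assumes ach: "achievable q W1 W2 eps n M1 M2" and "eps < 1" "n \<ge> 1"
  shows "(log 2 (real M1) + log 2 (real M2)) / real n
    \<le> 2 * (sum_cap_n q W1 W2 0 n - log 2 (1 - eps) / real n)"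
proof -
  obtain N1 N2 where ach0: "achievable q W1 W2 0 n N1 N2"
    and product: "(1 - eps) * real (max M1 M2) \<le> real N1 * real N2"
    using achievable_zero_error_product_ge[OF ach \<open>eps < 1\<close>] by blast
  have pos: "M1 \<ge> 1" "M2 \<ge> 1" "N1 \<ge> 1" "N2 \<ge> 1"
    using ach ach0 unfolding achievable_def by auto
  have "log 2 (real M1) \<le> log 2 (real (max M1 M2))" "log 2 (real M2) \<le> log 2 (real (max M1 M2))"
    using pos by auto
  moreover have "log 2 ((1 - eps) * real (max M1 M2)) \<le> log 2 (real N1 * real N2)"
    using product pos \<open>eps < 1\<close> by (subst log_le_cancel_iff) auto
  then have "log 2 (real (max M1 M2)) \<le> log 2 (real N1) + log 2 (real N2) - log 2 (1 - eps)"
    using pos \<open>eps < 1\<close> by (simp add: log_mult)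
  ultimately have "log 2 (real M1) + log 2 (real M2)
      \<le> 2 * (log 2 (real N1) + log 2 (real N2) - log 2 (1 - eps))"
    by argo
  then have "(log 2 (real M1) + log 2 (real M2)) / real n
      \<le> 2 * (log 2 (real N1) + log 2 (real N2) - log 2 (1 - eps)) / real n"
    by (simp add: divide_right_mono)
  also have "\<dots> = 2 * ((log 2 (real N1) + log 2 (real N2)) / real n - log 2 (1 - eps) / real n)"
    by (simp add: diff_divide_distrib)
  also have "(log 2 (real N1) + log 2 (real N2)) / real n \<le> sum_cap_n q W1 W2 0 n"
    unfolding sum_cap_n_eq_Sup_sum_rates using ach0 bdd_above_sum_rates[of 0 n] \<open>n \<ge> 1\<close>
    by (intro cSup_upper) (auto simp: sum_rates_def)
  finally show ?thesis by simp
qed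

lemma sum_cap_n_le_twice_zero_error:
  assumes "0 \<le> eps" "eps < 1" "n \<ge> 1"
  shows "sum_cap_n q W1 W2 eps n \<le> 2 * (sum_cap_n q W1 W2 0 n - log 2 (1 - eps) / real n)"
  unfolding sum_cap_n_eq_Sup_sum_rates[of q W1 W2 eps]
proof (rule cSup_least)
  show "sum_rates q W1 W2 eps n \<noteq> {}" using assms(1) by (rule sum_rates_nonempty)
  fix x assume "x \<in> sum_rates q W1 W2 eps n"
  then show "x \<le> 2 * (sum_cap_n q W1 W2 0 n - log 2 (1 - eps) / real n)"
    unfolding sum_rates_def using achievable_sum_rate_le_twice_zero_error assms(2,3) by auto
qed

lemma sum_cap_le_twice_zero_error:
  assumes "0 \<le> eps" "eps < 1"
  shows "sum_cap q W1 W2 eps \<le> 2 * (sum_cap q W1 W2 0 - log 2 (1 - eps))"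
  unfolding sum_cap_def
proof (rule cSUP_least)
  fix n :: nat assume n: "n \<in> {1..}"
  have "bdd_above ((\<lambda>m. sum_cap_n q W1 W2 0 m) ` {1..})"
    using sum_cap_n_le[of 0] by (intro bdd_aboveI[of _ "real (2 * q)"]) auto
  with n have "sum_cap_n q W1 W2 0 n \<le> (SUP m\<in>{1..}. sum_cap_n q W1 W2 0 m)"
    by (rule cSUP_upper)
  moreover have "- log 2 (1 - eps) / real n \<le> - log 2 (1 - eps) / 1"
    using n assms by (intro divide_left_mono) auto
  ultimately show "sum_cap_n q W1 W2 eps n \<le> 2 * ((SUP m\<in>{1..}. sum_cap_n q W1 W2 0 m) - log 2 (1 - eps))"
    using sum_cap_n_le_twice_zero_error[OF assms, of n q W1 W2] n by simp
qed simp

theorem lemma1: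
  fixes q n :: nat and eps :: real
    and W1 W2 :: "nat \<Rightarrow> nat \<Rightarrow> 'o::finite"
  assumes "q \<ge> 1" and "n \<ge> 1" and "0 < eps" and "eps < 1"
  shows "sum_cap_n q W1 W2 eps n / 2 - (- log 2 (1 - eps) / real n) \<le> sum_cap_n q W1 W2 0 n
       \<and> sum_cap q W1 W2 eps / 2 - (- log 2 (1 - eps)) \<le> sum_cap q W1 W2 0"
  using sum_cap_n_le_twice_zero_error[of eps n q W1 W2]
    sum_cap_le_twice_zero_error[of eps q W1 W2] assms
  by simp

end
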